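(* Every LCS-complete space is completely Baire, i.e. every closed subspace of it is a Baire space. In particular every LCS-complete space is Baire.
   Context: A Baire space is a space in which every intersection of countably many dense open subsets is dense. A space is LCS-complete if it is homeomorphic to a $G_\delta$ subset (countable intersection of open sets), with the subspace topology, of some locally compact sober space, locally compact meaning every point has a neighborhood base of compact saturated sets. *)

theory Defs
  imports "HOL-Analysis.Analysis"
begin

definition Baire_space :: "'a topology \<Rightarrow> bool" where
  "Baire_space X \<longleftrightarrow>
     (\<forall>\<U>. countable \<U> \<and> (\<forall>U\<in>\<U>. openin X U \<and> X closure_of U = topspace X)
        \<longrightarrow> X closure_of (topspace X \<inter> \<Inter>\<U>) = topspace X)"

definition completely_Baire_space :: "'a topology \<Rightarrow> bool" where
  "completely_Baire_space X \<longleftrightarrow>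
     (\<forall>C. closedin X C \<longrightarrow> Baire_space (subtopology X C))"

text \<open>Saturated set: intersection of its open neighbourhoods
  (equivalently, upward closed in the specialization preorder).\<close>
definition saturated_in :: "'a topology \<Rightarrow> 'a set \<Rightarrow> bool" where
  "saturated_in X A \<longleftrightarrow>
     A \<subseteq> topspace X \<and> A = topspace X \<inter> \<Inter>{U. openin X U \<and> A \<subseteq> U}"

definition locally_compact_sat :: "'a topology \<Rightarrow> bool" where
  "locally_compact_sat X \<longleftrightarrow>
     (\<forall>x\<in>topspace X. \<forall>U. openin X U \<and> x \<in> U \<longrightarrow>
        (\<exists>Q. compactin X Q \<and> saturated_in X Q \<and> x \<in> X interior_of Q \<and> Q \<subseteq> U))"

definition irreducible_closedin :: "'a topology \<Rightarrow> 'a set \<Rightarrow> bool" where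
  "irreducible_closedin X C \<longleftrightarrow>
     closedin X C \<and> C \<noteq> {} \<and>
     (\<forall>F1 F2. closedin X F1 \<and> closedin X F2 \<and> C \<subseteq> F1 \<union> F2 \<longrightarrow> C \<subseteq> F1 \<or> C \<subseteq> F2)"

definition sober_space :: "'a topology \<Rightarrow> bool" where
  "sober_space X \<longleftrightarrow>
     (\<forall>C. irreducible_closedin X C \<longrightarrow> (\<exists>!x. x \<in> topspace X \<and> X closure_of {x} = C))"

end

theory Submission
  imports Defs
begin

(* A closed subspace of a G_delta subset S of a locally compact sober space Y has the form S \<inter> F
   with F closed, so it suffices to show that D = S \<inter> F is Baire. Given countably many open sets
   whose traces are dense in D, together with the open sets cutting out S, local compactness
   yields a decreasing sequence of compact saturated sets Q_n inside a given open set and inside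
   the n-th open set, each with interior meeting D. It remains to find a point of F in all Q_n.
   By Zorn's lemma there is a maximal open set M containing the complement of F but none of the
   Q_n; since the Q_n decrease, the complement of M is irreducible, so by sobriety it is the
   closure of a point x. Each Q_n contains a point of that closure, i.e. a specialization of x,
   hence contains x because Q_n is saturated. *)

lemma saturated_in_specialization:
  assumes "saturated_in Y Q" and "y \<in> Q" and "y \<in> Y closure_of {x}"
  shows "x \<in> Q"
proof -
  have "x \<in> topspace Y"
    using assms(3) unfolding in_closure_of by (metis openin_topspace singletonD)
  moreover have "x \<in> U" if "openin Y U" "Q \<subseteq> U" for U
    using assms(2,3) that unfolding in_closure_of by blast
  ultimately show ?thesis
    using assms(1) unfolding saturated_in_def by blast
qed

lemma compactin_subset_Union_chain:
  assumes "compactin Y Q" and "\<C> \<noteq> {}" and "\<And>B. B \<in> \<C> \<Longrightarrow> openin Y B"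
    and "\<And>B B'. B \<in> \<C> \<Longrightarrow> B' \<in> \<C> \<Longrightarrow> B \<subseteq> B' \<or> B' \<subseteq> B"
    and "Q \<subseteq> \<Union>\<C>"
  shows "\<exists>B\<in>\<C>. Q \<subseteq> B"
proof -
  have "\<exists>\<G>. finite \<G> \<and> \<G> \<subseteq> \<C> \<and> Q \<subseteq> \<Union>\<G>"
    using assms(1,3,5) unfolding compactin_def by blast
  then obtain \<G> where \<G>: "finite \<G>" "\<G> \<subseteq> \<C>" "Q \<subseteq> \<Union>\<G>"
    by blast
  show ?thesis
  proof (cases "\<G> = {}")
    case True
    then show ?thesis using \<G>(3) assms(2) by auto
  next
    case False
    then obtain B where "B \<in> \<G>" and B: "\<forall>B'\<in>\<G>. B \<subseteq> B' \<longrightarrow> B = B'"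
      using finite_has_maximal[OF \<G>(1)] by blast
    have "B' \<subseteq> B" if "B' \<in> \<G>" for B'
      using assms(4)[of B B'] B \<G>(2) \<open>B \<in> \<G>\<close> that by auto
    then have "Q \<subseteq> B" using \<G>(3) by blast
    then show ?thesis using \<open>B \<in> \<G>\<close> \<G>(2) by blast
  qed
qed

lemma exists_maximal_openin_not_containing:
  assumes "\<And>Q. Q \<in> \<Q> \<Longrightarrow> compactin Y Q" and "openin Y V" and "\<And>Q. Q \<in> \<Q> \<Longrightarrow> \<not> Q \<subseteq> V"
  shows "\<exists>M. openin Y M \<and> V \<subseteq> M \<and> (\<forall>Q\<in>\<Q>. \<not> Q \<subseteq> M) \<and>
           (\<forall>M'. openin Y M' \<and> M \<subseteq> M' \<and> (\<forall>Q\<in>\<Q>. \<not> Q \<subseteq> M') \<longrightarrow> M' = M)"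
proof -
  define \<A> where "\<A> = {U. openin Y U \<and> V \<subseteq> U \<and> (\<forall>Q\<in>\<Q>. \<not> Q \<subseteq> U)}"
  have "\<Union>\<C> \<in> \<A>" if "\<C> \<noteq> {}" and "subset.chain \<A> \<C>" for \<C>
  proof -
    have \<C>: "\<C> \<subseteq> \<A>" "\<And>B B'. B \<in> \<C> \<Longrightarrow> B' \<in> \<C> \<Longrightarrow> B \<subseteq> B' \<or> B' \<subseteq> B"
      using that(2) unfolding subset_chain_def by blast+
    then have open_\<C>: "\<And>B. B \<in> \<C> \<Longrightarrow> openin Y B"
      unfolding \<A>_def by blast
    have "\<not> Q \<subseteq> \<Union>\<C>" if Q: "Q \<in> \<Q>" for Q
    proof
      assume "Q \<subseteq> \<Union>\<C>"
      then obtain B where "B \<in> \<C>" "Q \<subseteq> B"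
        using compactin_subset_Union_chain[OF assms(1)[OF Q] \<open>\<C> \<noteq> {}\<close> open_\<C> \<C>(2)] by blast
      then show False
        using \<C>(1) Q unfolding \<A>_def by blast
    qed
    moreover have "V \<subseteq> \<Union>\<C>"
      using \<C>(1) \<open>\<C> \<noteq> {}\<close> unfolding \<A>_def by blast
    ultimately show ?thesis
      using open_\<C> unfolding \<A>_def by blast
  qed
  moreover have "V \<in> \<A>"
    using assms(2,3) unfolding \<A>_def by blast
  ultimately have "\<exists>M\<in>\<A>. \<forall>M'\<in>\<A>. M \<subseteq> M' \<longrightarrow> M' = M"
    using subset_Zorn_nonempty[of \<A>] by blast
  then obtain M where "M \<in> \<A>" and "\<forall>M'\<in>\<A>. M \<subseteq> M' \<longrightarrow> M' = M"
    by blast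
  then show ?thesis
    unfolding \<A>_def by (intro exI[of _ M]) (simp, meson order_trans)
qed

lemma irreducible_closedin_complement_maximal_openin:
  assumes "decseq Q" and "openin Y M" and "\<And>n. Q n \<subseteq> topspace Y" and "\<And>n. \<not> Q n \<subseteq> M"
    and maximal: "\<forall>M'. openin Y M' \<and> M \<subseteq> M' \<and> (\<forall>n. \<not> Q n \<subseteq> M') \<longrightarrow> M' = M"
  shows "irreducible_closedin Y (topspace Y - M)"
proof -
  define K where "K = topspace Y - M"
  have swallow: "\<exists>n. Q n \<subseteq> M \<union> (topspace Y - F)" if F: "closedin Y F" "\<not> K \<subseteq> F" for F
  proof (rule ccontr)
    assume "\<nexists>n. Q n \<subseteq> M \<union> (topspace Y - F)"
    moreover have "openin Y (M \<union> (topspace Y - F))"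
      using assms(2) F(1) by blast
    ultimately have "M \<union> (topspace Y - F) = M"
      using maximal[rule_format, of "M \<union> (topspace Y - F)"] by blast
    then show False
      using F(2) unfolding K_def by blast
  qed
  have "K \<subseteq> F1 \<or> K \<subseteq> F2"
    if F12: "closedin Y F1" "closedin Y F2" "K \<subseteq> F1 \<union> F2" for F1 F2
  proof (rule ccontr)
    assume "\<not> (K \<subseteq> F1 \<or> K \<subseteq> F2)"
    then obtain n1 n2 where "Q n1 \<subseteq> M \<union> (topspace Y - F1)" "Q n2 \<subseteq> M \<union> (topspace Y - F2)"
      using swallow F12(1,2) by meson
    moreover have "Q (max n1 n2) \<subseteq> Q n1 \<inter> Q n2"
      using assms(1) by (simp add: decseq_def)
    ultimately have "Q (max n1 n2) \<subseteq> M"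
      using F12(3) unfolding K_def by blast
    then show False
      using assms(4) by blast
  qed
  moreover have "K \<noteq> {}"
    using assms(3,4)[of 0] unfolding K_def by blast
  ultimately show ?thesis
    using assms(2) unfolding irreducible_closedin_def K_def by blast
qed

lemma irreducible_closedin_meeting_decseq:
  assumes "\<And>n. compactin Y (Q n)" and "decseq Q"
    and "closedin Y F" and "\<And>n. F \<inter> Q n \<noteq> {}"
  obtains K where "irreducible_closedin Y K" "K \<subseteq> F" "\<And>n. K \<inter> Q n \<noteq> {}"
proof -
  have compact: "\<And>Q'. Q' \<in> range Q \<Longrightarrow> compactin Y Q'"
    using assms(1) by blast
  have not_sub: "\<And>Q'. Q' \<in> range Q \<Longrightarrow> \<not> Q' \<subseteq> topspace Y - F"
    using assms(4) by auto
  have "openin Y (topspace Y - F)"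
    using assms(3) by (rule openin_diff[OF openin_topspace])
  from exists_maximal_openin_not_containing[OF compact this not_sub]
  obtain M where M: "openin Y M" "topspace Y - F \<subseteq> M" "\<forall>Q'\<in>range Q. \<not> Q' \<subseteq> M"
    and maximal: "\<forall>M'. openin Y M' \<and> M \<subseteq> M' \<and> (\<forall>Q'\<in>range Q. \<not> Q' \<subseteq> M') \<longrightarrow> M' = M"
    by metis
  have Q_sub: "Q n \<subseteq> topspace Y" for n
    using assms(1) by (rule compactin_subset_topspace)
  have Q_not_sub: "\<not> Q n \<subseteq> M" for n
    using M(3) by simp
  have "irreducible_closedin Y (topspace Y - M)"
    using maximal by (intro irreducible_closedin_complement_maximal_openin[OF assms(2) M(1) Q_sub Q_not_sub]) simp
  moreover have "topspace Y - M \<subseteq> F"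
    using M(2) by blast
  moreover have "(topspace Y - M) \<inter> Q n \<noteq> {}" for n
    using Q_not_sub[of n] Q_sub[of n] by blast
  ultimately show ?thesis
    by (rule that)
qed

lemma sober_decseq_compact_saturated_meets_closedin:
  assumes "sober_space Y"
    and "\<And>n. compactin Y (Q n)" and "\<And>n. saturated_in Y (Q n)" and "decseq Q"
    and "closedin Y F" and "\<And>n. F \<inter> Q n \<noteq> {}"
  shows "\<exists>x\<in>F. \<forall>n. x \<in> Q n"
proof -
  obtain K where K: "irreducible_closedin Y K" "K \<subseteq> F" "\<And>n. K \<inter> Q n \<noteq> {}"
    using irreducible_closedin_meeting_decseq[OF assms(2,4-6)] by blast
  then obtain x where x: "x \<in> topspace Y" "Y closure_of {x} = K"
    using assms(1) unfolding sober_space_def by metis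
  have "x \<in> K"
    using x closure_of_subset[of "{x}" Y] by auto
  moreover have "x \<in> Q n" for n
  proof -
    obtain y where "y \<in> Q n" "y \<in> Y closure_of {x}"
      using K(3)[of n] x(2) by blast
    then show ?thesis
      by (rule saturated_in_specialization[OF assms(3)])
  qed
  ultimately show ?thesis
    using K(2) by blast
qed

lemma locally_compact_sat_decseq_in_dense_opens:
  assumes "locally_compact_sat Y" and "\<And>n. openin Y (A n)" and "\<And>n. D \<subseteq> Y closure_of (D \<inter> A n)"
    and "openin Y W" and "W \<inter> D \<noteq> {}"
  obtains Q where "\<And>n. compactin Y (Q n)" "\<And>n. saturated_in Y (Q n)" "decseq Q"
    "\<And>n. Q n \<subseteq> W \<inter> A n" "\<And>n. Y interior_of Q n \<inter> D \<noteq> {}"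
proof -
  have shrink: "\<exists>Q. compactin Y Q \<and> saturated_in Y Q \<and> Q \<subseteq> G \<inter> A n \<and> Y interior_of Q \<inter> D \<noteq> {}"
    if G: "openin Y G" "G \<inter> D \<noteq> {}" for G n
  proof -
    obtain z where "z \<in> G" "z \<in> Y closure_of (D \<inter> A n)"
      using G(2) assms(3)[of n] by blast
    then obtain x where x: "x \<in> G \<inter> A n" "x \<in> D"
      using G(1) unfolding in_closure_of by blast
    moreover have GA: "openin Y (G \<inter> A n)"
      using G(1) assms(2) by blast
    ultimately have "\<exists>Q. compactin Y Q \<and> saturated_in Y Q \<and> x \<in> Y interior_of Q \<and> Q \<subseteq> G \<inter> A n"
      using assms(1) openin_subset[OF GA] unfolding locally_compact_sat_def by blast
    then show ?thesis
      using x(2) by blast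
  qed
  define P where
    "P n Q \<longleftrightarrow> compactin Y Q \<and> saturated_in Y Q \<and> Q \<subseteq> W \<inter> A n \<and> Y interior_of Q \<inter> D \<noteq> {}"
    for n Q
  have "\<exists>Q'. P (Suc n) Q' \<and> Q' \<subseteq> Q" if "P n Q" for n Q
  proof -
    have "openin Y (Y interior_of Q)" "Y interior_of Q \<inter> D \<noteq> {}" "Y interior_of Q \<subseteq> Q" "Q \<subseteq> W"
      using that interior_of_subset[of Y Q] unfolding P_def by auto
    then show ?thesis
      using shrink[of "Y interior_of Q" "Suc n"] unfolding P_def by blast
  qed
  moreover have "\<exists>Q. P 0 Q"
    using shrink[OF assms(4,5)] unfolding P_def by blast
  ultimately obtain Q where Q: "\<forall>n. P n (Q n) \<and> Q (Suc n) \<subseteq> Q n"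
    using dependent_nat_choice[of P "\<lambda>n Q Q'. Q' \<subseteq> Q"] by metis
  show ?thesis
    by (rule that[of Q]) (use Q in \<open>simp_all add: P_def decseq_Suc_iff\<close>)
qed

lemma lcs_dense_Inter_countable_dense_opens:
  assumes "sober_space Y" and "locally_compact_sat Y" and "closedin Y F" and "D \<subseteq> F"
    and "countable \<A>" and "\<And>B. B \<in> \<A> \<Longrightarrow> openin Y B"
    and "\<And>B. B \<in> \<A> \<Longrightarrow> D \<subseteq> Y closure_of (D \<inter> B)"
  shows "D \<subseteq> Y closure_of (F \<inter> \<Inter>\<A>)"
proof -
  \<comment> \<open>Adding the whole space makes the family nonempty, so that it can be enumerated.\<close>
  define A where "A = from_nat_into (insert (topspace Y) \<A>)"
  have range_A: "range A = insert (topspace Y) \<A>"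
    using assms(5) by (simp add: A_def range_from_nat_into)
  then have A_cases: "A n = topspace Y \<or> A n \<in> \<A>" for n
    by blast
  have D_sub: "D \<subseteq> topspace Y"
    using assms(3,4) closedin_subset by blast
  have A_open: "openin Y (A n)" for n
    using A_cases[of n] assms(6) by auto
  have A_dense: "D \<subseteq> Y closure_of (D \<inter> A n)" for n
    using A_cases[of n] assms(7) D_sub closure_of_subset[OF D_sub] by (auto simp: Int_absorb2)
  have meets: "\<exists>x. x \<in> F \<inter> \<Inter>\<A> \<and> x \<in> W" if W: "openin Y W" "W \<inter> D \<noteq> {}" for W
  proof -
    obtain Q where Q: "\<And>n. compactin Y (Q n)" "\<And>n. saturated_in Y (Q n)" "decseq Q"
      "\<And>n. Q n \<subseteq> W \<inter> A n" "\<And>n. Y interior_of Q n \<inter> D \<noteq> {}"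
      by (rule locally_compact_sat_decseq_in_dense_opens[OF assms(2) A_open A_dense W]) (rule that)
    have "F \<inter> Q n \<noteq> {}" for n
      using Q(5)[of n] interior_of_subset[of Y "Q n"] assms(4) by blast
    then obtain x where x: "x \<in> F" "\<forall>n. x \<in> Q n"
      using sober_decseq_compact_saturated_meets_closedin[OF assms(1) Q(1-3) assms(3)] by blast
    have "x \<in> \<Inter>(range A)" "x \<in> W"
      using x(2) Q(4) by blast+
    then show ?thesis
      using x(1) range_A by auto
  qed
  show ?thesis
  proof
    fix z assume "z \<in> D"
    then have "z \<in> W \<Longrightarrow> openin Y W \<Longrightarrow> \<exists>x. x \<in> F \<inter> \<Inter>\<A> \<and> x \<in> W" for W
      using meets by blast
    then show "z \<in> Y closure_of (F \<inter> \<Inter>\<A>)"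
      using \<open>z \<in> D\<close> D_sub unfolding in_closure_of by blast
  qed
qed

lemma dense_in_subtopology_iff:
  "subtopology Y D closure_of U = D \<longleftrightarrow> D \<subseteq> Y closure_of (D \<inter> U)"
  unfolding closure_of_subtopology by blast

lemma lcs_dense_Int_gdelta_Inter:
  assumes "sober_space Y" and "locally_compact_sat Y" and "gdelta_in Y S" and "closedin Y F"
    and "countable \<V>" and "\<And>V. V \<in> \<V> \<Longrightarrow> openin Y V"
    and "\<And>V. V \<in> \<V> \<Longrightarrow> S \<inter> F \<subseteq> Y closure_of (S \<inter> F \<inter> V)"
  shows "S \<inter> F \<subseteq> Y closure_of (S \<inter> F \<inter> \<Inter>\<V>)"
proof -
  have "(countable intersection_of openin Y) S"
    using assms(3) by (simp add: gdelta_in_alt)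
  then obtain \<T> where \<T>: "countable \<T>" "\<And>T. T \<in> \<T> \<Longrightarrow> openin Y T" "\<Inter>\<T> = S"
    unfolding intersection_of_def by blast
  \<comment> \<open>The open sets cutting out S are trivially dense in S \<inter> F, so they may join the family.\<close>
  define \<A> where "\<A> = \<V> \<union> \<T>"
  have \<A>_open: "openin Y B" if "B \<in> \<A>" for B
    using that assms(6) \<T>(2) unfolding \<A>_def by blast
  have "S \<inter> F \<subseteq> Y closure_of (S \<inter> F \<inter> T)" if "T \<in> \<T>" for T
  proof -
    have "S \<inter> F \<inter> T = S \<inter> F"
      using that \<T>(3) by blast
    then show ?thesis
      using assms(4) closedin_subset closure_of_subset[of "S \<inter> F" Y] by auto
  qed
  then have \<A>_dense: "S \<inter> F \<subseteq> Y closure_of (S \<inter> F \<inter> B)" if "B \<in> \<A>" for B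
    using that assms(7) unfolding \<A>_def by blast
  have "countable \<A>"
    using assms(5) \<T>(1) unfolding \<A>_def by simp
  with Int_lower2 have "S \<inter> F \<subseteq> Y closure_of (F \<inter> \<Inter>\<A>)"
    by (rule lcs_dense_Inter_countable_dense_opens[OF assms(1,2,4) _ _ \<A>_open \<A>_dense])
  moreover have "F \<inter> \<Inter>\<A> \<subseteq> S \<inter> F \<inter> \<Inter>\<V>"
    using \<T>(3) unfolding \<A>_def by blast
  ultimately show ?thesis
    by (meson closure_of_mono order_trans)
qed

lemma Baire_space_subtopology_gdelta_Int_closedin:
  assumes "sober_space Y" and "locally_compact_sat Y"
    and "gdelta_in Y S" and "closedin Y F"
  shows "Baire_space (subtopology Y (S \<inter> F))"
proof -
  define D where "D = S \<inter> F"
  have "D \<subseteq> topspace Y"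
    using assms(4) closedin_subset unfolding D_def by blast
  then have "topspace (subtopology Y D) = D"
    by (rule topspace_subtopology_subset)
  then show ?thesis
    unfolding Baire_space_def D_def[symmetric]
  proof (intro allI impI)
    fix \<U> assume \<U>: "countable \<U> \<and> (\<forall>U\<in>\<U>. openin (subtopology Y D) U \<and> subtopology Y D closure_of U = topspace (subtopology Y D))"
    have "\<exists>V. openin Y V \<and> U = V \<inter> D" if "U \<in> \<U>" for U
      using \<U> that unfolding openin_subtopology by blast
    then obtain V where V: "\<And>U. U \<in> \<U> \<Longrightarrow> openin Y (V U) \<and> U = V U \<inter> D"
      by metis
    have V_open: "openin Y B" if "B \<in> V ` \<U>" for B
      using that V by blast
    have V_dense: "D \<subseteq> Y closure_of (D \<inter> B)" if "B \<in> V ` \<U>" for B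
    proof -
      obtain U where U: "U \<in> \<U>" "B = V U"
        using \<open>B \<in> V ` \<U>\<close> by blast
      then have "D \<inter> U = D \<inter> B"
        using V[OF U(1)] by blast
      then show ?thesis
        using \<U> U(1) \<open>topspace (subtopology Y D) = D\<close> dense_in_subtopology_iff[of Y D U] by simp
    qed
    have "countable (V ` \<U>)"
      using \<U> by simp
    then have "D \<subseteq> Y closure_of (D \<inter> \<Inter>(V ` \<U>))"
      using lcs_dense_Int_gdelta_Inter[OF assms, of "V ` \<U>"] V_open V_dense unfolding D_def by blast
    moreover have "D \<inter> \<Inter>(V ` \<U>) \<subseteq> D \<inter> (D \<inter> \<Inter>\<U>)"
      using V by blast
    ultimately show "subtopology Y D closure_of (topspace (subtopology Y D) \<inter> \<Inter>\<U>) = topspace (subtopology Y D)"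
      unfolding \<open>topspace (subtopology Y D) = D\<close> dense_in_subtopology_iff
      by (meson closure_of_mono order_trans)
  qed
qed

lemma completely_Baire_space_subtopology_gdelta:
  assumes "sober_space Y" and "locally_compact_sat Y" and "gdelta_in Y S"
  shows "completely_Baire_space (subtopology Y S)"
  unfolding completely_Baire_space_def
proof (intro allI impI)
  fix C assume "closedin (subtopology Y S) C"
  then obtain F where F: "closedin Y F" "C = F \<inter> S"
    unfolding closedin_subtopology by blast
  then have "S \<inter> C = S \<inter> F"
    by blast
  then show "Baire_space (subtopology (subtopology Y S) C)"
    using Baire_space_subtopology_gdelta_Int_closedin[OF assms F(1)]
    by (simp add: subtopology_subtopology)
qed

lemma Baire_space_homeomorphic_map:
  assumes hom: "homeomorphic_map X X' f" and "Baire_space X'"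
  shows "Baire_space X"
  unfolding Baire_space_def
proof (intro allI impI)
  fix \<U> assume \<U>: "countable \<U> \<and> (\<forall>U\<in>\<U>. openin X U \<and> X closure_of U = topspace X)"
  have surj: "f ` topspace X = topspace X'" and inj: "inj_on f (topspace X)"
    using hom homeomorphic_imp_surjective_map homeomorphic_imp_injective_map by blast+
  have sub: "U \<subseteq> topspace X" if "U \<in> \<U>" for U
    using \<U> that openin_subset by blast
  have "openin X' (f ` U)" if "U \<in> \<U>" for U
    using \<U> that homeomorphic_map_openness_eq[OF hom] by blast
  moreover have "X' closure_of (f ` U) = topspace X'" if "U \<in> \<U>" for U
    using \<U> that homeomorphic_map_closure_of[OF hom sub[OF that]] surj by simp
  ultimately have "X' closure_of (topspace X' \<inter> \<Inter>((`) f ` \<U>)) = topspace X'"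
    using assms(2) \<U> unfolding Baire_space_def by simp
  moreover have "topspace X' \<inter> \<Inter>((`) f ` \<U>) = f ` (topspace X \<inter> \<Inter>\<U>)"
  proof
    show "f ` (topspace X \<inter> \<Inter>\<U>) \<subseteq> topspace X' \<inter> \<Inter>((`) f ` \<U>)"
      using surj by blast
    show "topspace X' \<inter> \<Inter>((`) f ` \<U>) \<subseteq> f ` (topspace X \<inter> \<Inter>\<U>)"
    proof
      fix y assume y: "y \<in> topspace X' \<inter> \<Inter>((`) f ` \<U>)"
      then obtain x where x: "x \<in> topspace X" "y = f x"
        using surj by blast
      have "x \<in> U" if "U \<in> \<U>" for U
        using y x that inj_on_image_mem_iff[OF inj x(1) sub[OF that]] by blast
      then show "y \<in> f ` (topspace X \<inter> \<Inter>\<U>)"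
        using x by blast
    qed
  qed
  ultimately have "f ` (X closure_of (topspace X \<inter> \<Inter>\<U>)) = f ` topspace X"
    using surj homeomorphic_map_closure_of[OF hom, of "topspace X \<inter> \<Inter>\<U>"] by simp
  then show "X closure_of (topspace X \<inter> \<Inter>\<U>) = topspace X"
    using inj_on_image_eq_iff[OF inj closure_of_subset_topspace subset_refl] by blast
qed

lemma completely_Baire_space_homeomorphic_space:
  assumes "X homeomorphic_space X'" and "completely_Baire_space X'"
  shows "completely_Baire_space X"
  unfolding completely_Baire_space_def
proof (intro allI impI)
  obtain f where hom: "homeomorphic_map X X' f"
    using assms(1) unfolding homeomorphic_space by blast
  fix C assume C: "closedin X C"
  then have "closedin X' (f ` C)"
    using hom homeomorphic_map_closedness_eq by blast
  moreover have "f ` (topspace X \<inter> C) = topspace X' \<inter> f ` C"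
    using closedin_subset[OF C] homeomorphic_imp_surjective_map[OF hom] by auto
  ultimately show "Baire_space (subtopology X C)"
    using Baire_space_homeomorphic_map[OF homeomorphic_map_subtopologies[OF hom]] assms(2)
    unfolding completely_Baire_space_def by blast
qed

lemma completely_Baire_imp_Baire_space:
  "completely_Baire_space X \<Longrightarrow> Baire_space X"
  unfolding completely_Baire_space_def by (metis closedin_topspace subtopology_topspace)

theorem corollary10p4:
  fixes X :: "'a topology" and Y :: "'b topology" and S :: "'b set"
  assumes "sober_space Y" and "locally_compact_sat Y"
    and "gdelta_in Y S"
    and "X homeomorphic_space subtopology Y S"
  shows "completely_Baire_space X \<and> Baire_space X"
proof -
  have "completely_Baire_space X"
    using completely_Baire_space_homeomorphic_space[OF assms(4)]
      completely_Baire_space_subtopology_gdelta[OF assms(1-3)] by blast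
  then show ?thesis
    using completely_Baire_imp_Baire_space by blast
qed

end
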